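(* Let $D\subset\Phi^+$ be an orthogonal subset with $D\cap\mathcal C_1=\{\varepsilon_1+\varepsilon_j\}$ for some $1<j\le n$. Let $\tilde\Phi^+$ be the set of roots of $\Phi^+$ involving neither $\varepsilon_1$ nor $\varepsilon_j$ (i.e. $\tilde\Phi^+=\Phi^+\setminus(\mathcal C_1\cup\mathcal C_j\cup\mathcal R_j\cup\mathcal R_{-j})$), $\tilde D=D\cap\tilde\Phi^+$, $\tilde\sigma=\prod_{\beta\in\tilde D}r_\beta$, and $l'(\tilde\sigma)=\#\{\alpha\in\tilde\Phi^+:\tilde\sigma(\alpha)\notin\tilde\Phi^+\}$ (the length of $\tilde\sigma$ in the Weyl group of the root system $\tilde\Phi=\tilde\Phi^+\cup-\tilde\Phi^+$). Then $l(\sigma)=l'(\tilde\sigma)+|S(\varepsilon_1+\varepsilon_j)|+1$.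
   Context: Let $\Phi$ be a root system of type $B_n$, $C_n$ or $D_n$ in $\mathbb R^n$ with standard basis $\varepsilon_1,\dots,\varepsilon_n$ and positive roots $\Phi^+=\{\varepsilon_i\pm\varepsilon_j:1\le i<j\le n\}\cup\Phi_1^+$, where $\Phi_1^+=\emptyset$ for $D_n$, $\{\varepsilon_i\}$ for $B_n$, $\{2\varepsilon_i\}$ for $C_n$. $D\subset\Phi^+$ is orthogonal if its roots are pairwise orthogonal. $r_\beta$ denotes the reflection in the hyperplane orthogonal to $\beta$, $\sigma=\prod_{\beta\in D}r_\beta$, and $l(\sigma)=\#\{\alpha\in\Phi^+:\sigma(\alpha)\in-\Phi^+\}$ (the length of $\sigma$ in the Weyl group). $\mathrm{col}(\varepsilon_i\pm\varepsilon_j)=\mathrm{col}(\varepsilon_i)=\mathrm{col}(2\varepsilon_i)=i$; $\mathrm{row}(\varepsilon_i\pm\varepsilon_j)=\mp j$, $\mathrm{row}(\varepsilon_i)=0$, $\mathrm{row}(2\varepsilon_i)=-i$; $\mathcal R_i=\{\alpha\in\Phi^+:\mathrm{row}(\alpha)=i\}$, $\mathcal C_j=\{\alpha\in\Phi^+:\mathrm{col}(\alpha)=j\}$. For $\beta\in\Phi^+$, $S(\beta)=\{\alpha\in\Phi^+:\beta-\alpha\in\Phi^+\}$. *)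

theory Defs
  imports Complex_Main "HOL-Library.Function_Algebras"
begin

text \<open>Vectors of R^n are modelled as functions nat => real, with the standard
 basis vectors eps 1, ..., eps n (coordinates outside {1..n} are zero for all roots).\<close>

datatype rtype = TypeB | TypeC | TypeD

definition eps :: "nat \<Rightarrow> nat \<Rightarrow> real" where
  "eps i = (\<lambda>k. if k = i then 1 else 0)"

definition ip :: "nat \<Rightarrow> (nat \<Rightarrow> real) \<Rightarrow> (nat \<Rightarrow> real) \<Rightarrow> real" where
  "ip n x y = (\<Sum>k\<in>{1..n}. x k * y k)"

definition short_pos :: "rtype \<Rightarrow> nat \<Rightarrow> (nat \<Rightarrow> real) set" where
  "short_pos t n = (case t of
      TypeD \<Rightarrow> {}
    | TypeB \<Rightarrow> {eps i | i. 1 \<le> i \<and> i \<le> n}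
    | TypeC \<Rightarrow> {(\<lambda>k. 2 * eps i k) | i. 1 \<le> i \<and> i \<le> n})"

definition pos_roots :: "rtype \<Rightarrow> nat \<Rightarrow> (nat \<Rightarrow> real) set" where
  "pos_roots t n =
     {eps i + eps j | i j. 1 \<le> i \<and> i < j \<and> j \<le> n}
   \<union> {eps i - eps j | i j. 1 \<le> i \<and> i < j \<and> j \<le> n}
   \<union> short_pos t n"

definition orthogonal_set :: "nat \<Rightarrow> (nat \<Rightarrow> real) set \<Rightarrow> bool" where
  "orthogonal_set n D = (\<forall>\<alpha>\<in>D. \<forall>\<beta>\<in>D. \<alpha> \<noteq> \<beta> \<longrightarrow> ip n \<alpha> \<beta> = 0)"

definition refl :: "nat \<Rightarrow> (nat \<Rightarrow> real) \<Rightarrow> (nat \<Rightarrow> real) \<Rightarrow> (nat \<Rightarrow> real)" where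
  "refl n \<beta> x = (\<lambda>k. x k - (2 * ip n x \<beta> / ip n \<beta> \<beta>) * \<beta> k)"

definition refl_prod :: "nat \<Rightarrow> (nat \<Rightarrow> real) set \<Rightarrow> (nat \<Rightarrow> real) \<Rightarrow> (nat \<Rightarrow> real)" where
  "refl_prod n D = Finite_Set.fold (\<lambda>\<beta> g. refl n \<beta> \<circ> g) id D"

definition len :: "rtype \<Rightarrow> nat \<Rightarrow> ((nat \<Rightarrow> real) \<Rightarrow> (nat \<Rightarrow> real)) \<Rightarrow> nat" where
  "len t n w = card {\<alpha> \<in> pos_roots t n. - w \<alpha> \<in> pos_roots t n}"

text \<open>col and row, following the table:
 col(eps_i +- eps_j) = col(eps_i) = col(2 eps_i) = i;
 row(eps_i +- eps_j) = -+ j, row(eps_i) = 0, row(2 eps_i) = -i.\<close>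
definition col :: "(nat \<Rightarrow> real) \<Rightarrow> nat" where
  "col \<alpha> = (LEAST i. \<alpha> i \<noteq> 0)"

definition row :: "(nat \<Rightarrow> real) \<Rightarrow> int" where
  "row \<alpha> = (if \<exists>j. j \<noteq> col \<alpha> \<and> \<alpha> j \<noteq> 0
              then (let j = (THE j. j \<noteq> col \<alpha> \<and> \<alpha> j \<noteq> 0)
                    in (if \<alpha> j > 0 then - int j else int j))
              else if \<alpha> (col \<alpha>) = 2 then - int (col \<alpha>) else 0)"

definition Rows :: "rtype \<Rightarrow> nat \<Rightarrow> int \<Rightarrow> (nat \<Rightarrow> real) set" where
  "Rows t n i = {\<alpha> \<in> pos_roots t n. row \<alpha> = i}"

definition Cols :: "rtype \<Rightarrow> nat \<Rightarrow> nat \<Rightarrow> (nat \<Rightarrow> real) set" where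
  "Cols t n j = {\<alpha> \<in> pos_roots t n. col \<alpha> = j}"

definition Sset :: "rtype \<Rightarrow> nat \<Rightarrow> (nat \<Rightarrow> real) \<Rightarrow> (nat \<Rightarrow> real) set" where
  "Sset t n \<beta> = {\<alpha> \<in> pos_roots t n. \<beta> - \<alpha> \<in> pos_roots t n}"

end

theory Submission
  imports Defs
begin

text \<open>
  Encode a positive root by an index triple (a, b, e), standing for
  eps a + e eps b.  Every product of reflections in an orthogonal set of roots is a signed
  permutation eps a \<mapsto> s a eps (p a), and whether it sends a positive root to a negative one can
  be read off from p and s (sent_negative).  Under the hypotheses, D consists of
  beta = eps 1 + eps j together with the roots of D avoiding the indices 1 and j, so
  sigma = r_beta \<circ> sigma-tilde, where sigma-tilde permutes the indices K = {1..n} - {1, j}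
  and fixes 1, j, while r_beta exchanges eps 1 and -eps j.  Splitting the positive roots into
  those supported on K, those supported on {1, j}, the roots eps 1 +- eps b (b in K) and the
  remaining ones involving eps j, one compares the inversions of sigma with the inversions of
  sigma-tilde plus the elements of S(beta): they agree on each part, except that the part on
  {1, j} contributes one more inversion; on the roots eps 1 +- eps b the agreement holds only
  after summing over b, because p permutes K.
\<close>

section \<open>Positive roots as index triples\<close>

text \<open>The long positive roots
  eps a +- eps b (a < b) are the triples (a, b, +-1); the short root eps a of type B is
  (a, a, 0) and the long root 2 eps a of type C is (a, a, 1).  Restricting the indices to a
  set J gives the positive system of the root system spanned by the eps a, a in J.\<close>

definition vec :: "nat \<Rightarrow> nat \<Rightarrow> real \<Rightarrow> nat \<Rightarrow> real" where
  "vec a b e = (\<lambda>k. eps a k + e * eps b k)"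

definition root_of :: "nat \<times> nat \<times> real \<Rightarrow> nat \<Rightarrow> real" where
  "root_of x = (case x of (a, b, e) \<Rightarrow> vec a b e)"

definition long_idx :: "nat set \<Rightarrow> (nat \<times> nat \<times> real) set" where
  "long_idx J = {(a, b, e). a \<in> J \<and> b \<in> J \<and> a < b \<and> (e = 1 \<or> e = -1)}"

definition short_coeff :: "rtype \<Rightarrow> real" where
  "short_coeff t = (case t of TypeC \<Rightarrow> 1 | _ \<Rightarrow> 0)"

definition short_idx :: "rtype \<Rightarrow> nat set \<Rightarrow> (nat \<times> nat \<times> real) set" where
  "short_idx t J = (if t = TypeD then {} else {(a, a, short_coeff t) | a. a \<in> J})"

definition root_idx :: "rtype \<Rightarrow> nat set \<Rightarrow> (nat \<times> nat \<times> real) set" where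
  "root_idx t J = long_idx J \<union> short_idx t J"

lemma eps_app: "eps i k = (if k = i then 1 else 0)"
  by (simp add: eps_def)

lemma vec_app: "vec a b e k = (if k = a then 1 else 0) + e * (if k = b then 1 else 0)"
  by (simp add: vec_def eps_def)

lemma root_of_triple [simp]: "root_of (a, b, e) = vec a b e"
  by (simp add: root_of_def)

lemma short_coeff_cases: "short_coeff t = 0 \<or> short_coeff t = 1"
  and short_coeff_B: "short_coeff TypeB = 0" and short_coeff_C: "short_coeff TypeC = 1"
  by (cases t) (auto simp: short_coeff_def)

lemma root_idx_cases:
  assumes "(a, b, e) \<in> root_idx t J"
  shows "(a \<in> J \<and> b \<in> J \<and> a < b \<and> (e = 1 \<or> e = -1))
       \<or> (t \<noteq> TypeD \<and> a \<in> J \<and> b = a \<and> e = short_coeff t)"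
  using assms by (auto simp: root_idx_def long_idx_def short_idx_def split: if_splits)

lemma root_idx_long: "a \<in> J \<Longrightarrow> b \<in> J \<Longrightarrow> a < b \<Longrightarrow> e = 1 \<or> e = -1 \<Longrightarrow> (a, b, e) \<in> root_idx t J"
  by (auto simp: root_idx_def long_idx_def)

lemma root_idx_short: "a \<in> J \<Longrightarrow> t \<noteq> TypeD \<Longrightarrow> (a, a, short_coeff t) \<in> root_idx t J"
  by (auto simp: root_idx_def short_idx_def)

lemma root_idx_mono: "J \<subseteq> J' \<Longrightarrow> root_idx t J \<subseteq> root_idx t J'"
  by (auto simp: root_idx_def long_idx_def short_idx_def)

lemma finite_root_idx: "finite J \<Longrightarrow> finite (root_idx t J)"
proof -
  assume J: "finite J"
  have "long_idx J \<subseteq> J \<times> J \<times> {1, -1}" by (auto simp: long_idx_def)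
  moreover have "short_idx t J \<subseteq> (\<lambda>a. (a, a, short_coeff t)) ` J" by (auto simp: short_idx_def)
  ultimately show ?thesis using J unfolding root_idx_def
    by (meson finite_SigmaI finite_UnI finite_imageI finite_insert finite.emptyI finite_subset)
qed

lemma vec_plus: "eps i + eps j = vec i j 1" and vec_minus: "eps i - eps j = vec i j (-1)"
  and vec_short_B: "eps i = vec i i 0" and vec_short_C: "(\<lambda>k. 2 * eps i k) = vec i i 1"
  by (auto simp: vec_def fun_eq_iff)

lemma pos_roots_root_idx: "pos_roots t n = root_of ` root_idx t {1..n}"
proof -
  have long: "root_of ` long_idx {1..n} = {eps i + eps j |i j. 1 \<le> i \<and> i < j \<and> j \<le> n}
     \<union> {eps i - eps j |i j. 1 \<le> i \<and> i < j \<and> j \<le> n}" (is "_ = ?R")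
  proof
    show "root_of ` long_idx {1..n} \<subseteq> ?R"
      unfolding vec_plus vec_minus long_idx_def by auto
    show "?R \<subseteq> root_of ` long_idx {1..n}"
    proof
      fix x assume "x \<in> ?R"
      then obtain i j e where "x = vec i j e" "1 \<le> i" "i < j" "j \<le> n" "e = 1 \<or> e = -1"
        unfolding vec_plus vec_minus by blast
      then show "x \<in> root_of ` long_idx {1..n}"
        unfolding long_idx_def image_iff by (intro bexI[of _ "(i, j, e)"]) auto
    qed
  qed
  have short: "root_of ` short_idx t {1..n} = short_pos t n"
    unfolding short_pos_def short_idx_def short_coeff_def vec_short_C
    by (cases t) (auto simp: image_iff vec_short_B)
  show ?thesis unfolding pos_roots_def root_idx_def image_Un long short by simp
qed

lemma root_of_inj: "inj_on root_of (root_idx t J)"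
proof (rule inj_onI)
  fix x y assume x: "x \<in> root_idx t J" and y: "y \<in> root_idx t J" and eq: "root_of x = root_of y"
  obtain a b e a' b' e' where xy: "x = (a, b, e)" "y = (a', b', e')" by (cases x, cases y)
  have h: "vec a b e k = vec a' b' e' k" for k using eq xy by simp
  from h[of a] h[of b] h[of a'] h[of b'] root_idx_cases[OF x[unfolded xy]]
    root_idx_cases[OF y[unfolded xy]] short_coeff_cases[of t]
  show "x = y" unfolding xy vec_app by (auto split: if_splits)
qed

lemma card_root_of: "card {\<alpha> \<in> root_of ` root_idx t J. P \<alpha>} = card {x \<in> root_idx t J. P (root_of x)}"
proof -
  have "{\<alpha> \<in> root_of ` root_idx t J. P \<alpha>} = root_of ` {x \<in> root_idx t J. P (root_of x)}" by auto
  moreover have "inj_on root_of {x \<in> root_idx t J. P (root_of x)}"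
    by (rule inj_on_subset[OF root_of_inj]) auto
  ultimately show ?thesis by (simp add: card_image)
qed

lemma signed_pair_mem:
  assumes "c \<in> J" "d \<in> J" "c \<noteq> d" "u = 1 \<or> u = -1" "v = 1 \<or> v = -1"
  shows "(\<lambda>k. u * eps c k + v * eps d k) \<in> root_of ` root_idx t J \<longleftrightarrow> (c < d \<and> u = 1) \<or> (d < c \<and> v = 1)"
proof
  assume "(\<lambda>k. u * eps c k + v * eps d k) \<in> root_of ` root_idx t J"
  then obtain a b e where x: "(a, b, e) \<in> root_idx t J"
    and eq: "(\<lambda>k. u * eps c k + v * eps d k) = vec a b e" by auto
  have h: "u * eps c k + v * eps d k = vec a b e k" for k using eq by metis
  from h[of a] h[of b] h[of c] h[of d] root_idx_cases[OF x] short_coeff_cases[of t] assms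
  show "(c < d \<and> u = 1) \<or> (d < c \<and> v = 1)"
    unfolding vec_app eps_app by (auto split: if_splits)
next
  assume "(c < d \<and> u = 1) \<or> (d < c \<and> v = 1)"
  then show "(\<lambda>k. u * eps c k + v * eps d k) \<in> root_of ` root_idx t J"
  proof
    assume "c < d \<and> u = 1"
    then show ?thesis using assms unfolding image_iff
      by (intro bexI[of _ "(c, d, v)"] root_idx_long) (auto simp: vec_def)
  next
    assume "d < c \<and> v = 1"
    then show ?thesis using assms unfolding image_iff
      by (intro bexI[of _ "(d, c, u)"] root_idx_long) (auto simp: vec_def)
  qed
qed

lemma signed_short_mem:
  assumes "c \<in> J" "u = 1 \<or> u = -1" "t \<noteq> TypeD"
  shows "(\<lambda>k. u * vec c c (short_coeff t) k) \<in> root_of ` root_idx t J \<longleftrightarrow> u = 1"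
proof
  assume "(\<lambda>k. u * vec c c (short_coeff t) k) \<in> root_of ` root_idx t J"
  then obtain a b e where x: "(a, b, e) \<in> root_idx t J"
    and eq: "(\<lambda>k. u * vec c c (short_coeff t) k) = vec a b e" by auto
  have h: "u * vec c c (short_coeff t) k = vec a b e k" for k using eq by metis
  from h[of a] h[of b] h[of c] root_idx_cases[OF x] assms short_coeff_cases[of t]
  show "u = 1" unfolding vec_app by (auto split: if_splits)
next
  assume "u = 1"
  then show "(\<lambda>k. u * vec c c (short_coeff t) k) \<in> root_of ` root_idx t J" using assms
    unfolding image_iff by (intro bexI[of _ "(c, c, short_coeff t)"] root_idx_short) auto
qed

lemma col_root_of:
  assumes "(a, b, e) \<in> root_idx t J"
  shows "col (vec a b e) = a"
proof -
  have "vec a b e a \<noteq> 0" using root_idx_cases[OF assms] short_coeff_cases[of t] by (auto simp: vec_app)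
  moreover have "vec a b e i = 0" if "i < a" for i
    using root_idx_cases[OF assms] that by (auto simp: vec_app)
  ultimately show ?thesis unfolding col_def by (auto intro!: Least_equality) (meson not_le)
qed

lemma row_long:
  assumes "(a, b, e) \<in> root_idx t J" "a < b"
  shows "row (vec a b e) = (if e > 0 then - int b else int b)"
proof -
  have e: "e = 1 \<or> e = -1" using root_idx_cases[OF assms(1)] assms(2) by auto
  have "(THE k. k \<noteq> a \<and> vec a b e k \<noteq> 0) = b"
    by (rule the_equality) (use assms(2) e in \<open>auto simp: vec_app split: if_splits\<close>)
  moreover have "\<exists>k. k \<noteq> a \<and> vec a b e k \<noteq> 0"
    using assms(2) e by (intro exI[of _ b]) (auto simp: vec_app)
  ultimately show ?thesis unfolding row_def col_root_of[OF assms(1)] using e by (auto simp: vec_app)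
qed

lemma row_short:
  assumes "(a, a, e) \<in> root_idx t J"
  shows "row (vec a a e) = (if t = TypeC then - int a else 0)"
proof -
  have e: "e = short_coeff t" "t \<noteq> TypeD" using root_idx_cases[OF assms] by auto
  have "\<not> (\<exists>k. k \<noteq> a \<and> vec a a e k \<noteq> 0)" by (auto simp: vec_app)
  then show ?thesis unfolding row_def col_root_of[OF assms] using e
    by (cases t) (auto simp: vec_app short_coeff_def)
qed

section \<open>Reflections and products of orthogonal reflections\<close>

lemma ip_sym: "ip n x y = ip n y x"
  by (simp add: ip_def mult.commute)

lemma ip_add: "ip n (x + y) z = ip n x z + ip n y z"
  by (simp add: ip_def sum.distrib algebra_simps)

lemma ip_smul: "ip n (\<lambda>k. c * x k) z = c * ip n x z"
  by (simp add: ip_def sum_distrib_left algebra_simps)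

lemma ip_diff_smul: "ip n (\<lambda>k. x k - c * y k) z = ip n x z - c * ip n y z"
  by (simp add: ip_def sum_subtractf sum_distrib_left algebra_simps)

lemma ip_eps:
  assumes "a \<in> {1..n}" shows "ip n (eps a) y = y a"
proof -
  have "(\<Sum>k\<in>{1..n}. eps a k * y k) = (\<Sum>k\<in>{1..n}. if a = k then y a else 0)"
    by (rule sum.cong) (auto simp: eps_def)
  then show ?thesis unfolding ip_def using assms by simp
qed

lemma ip_vec: "a \<in> {1..n} \<Longrightarrow> b \<in> {1..n} \<Longrightarrow> ip n (vec a b e) y = y a + e * y b"
proof -
  assume "a \<in> {1..n}" "b \<in> {1..n}"
  moreover have "vec a b e = eps a + (\<lambda>k. e * eps b k)" by (simp add: vec_def fun_eq_iff)
  ultimately show ?thesis by (simp add: ip_add ip_smul ip_eps)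
qed

lemma refl_add: "refl n \<beta> (x + y) = refl n \<beta> x + refl n \<beta> y"
  by (simp add: refl_def ip_add fun_eq_iff add_divide_distrib algebra_simps)

lemma refl_smul: "refl n \<beta> (\<lambda>k. c * x k) = (\<lambda>k. c * refl n \<beta> x k)"
  by (simp add: refl_def ip_smul fun_eq_iff algebra_simps)

lemma refl_eps: "a \<in> {1..n} \<Longrightarrow> refl n \<beta> (eps a) = (\<lambda>k. eps a k - (2 * \<beta> a / ip n \<beta> \<beta>) * \<beta> k)"
  by (simp add: refl_def ip_eps)

text \<open>Reflections in orthogonal vectors commute; hence the product over an orthogonal set
  does not depend on the order, and one factor can be split off.\<close>
lemma refl_comm:
  assumes "ip n \<alpha> \<beta> = 0"
  shows "refl n \<beta> \<circ> refl n \<alpha> = refl n \<alpha> \<circ> refl n \<beta>"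
proof -
  have "ip n \<beta> \<alpha> = 0" using assms ip_sym by metis
  then show ?thesis using assms unfolding refl_def comp_def fun_eq_iff ip_diff_smul by simp
qed

lemma refl_prod_insert:
  assumes "orthogonal_set n D" "insert \<beta> A \<subseteq> D" "finite A" "\<beta> \<notin> A"
  shows "refl_prod n (insert \<beta> A) = refl n \<beta> \<circ> refl_prod n A"
proof -
  have "comp_fun_commute_on D (\<lambda>\<beta> g. refl n \<beta> \<circ> g)"
  proof
    fix \<alpha> \<gamma> assume "\<alpha> \<in> D" "\<gamma> \<in> D"
    then have "refl n \<gamma> \<circ> refl n \<alpha> = refl n \<alpha> \<circ> refl n \<gamma>"
      using assms(1) refl_comm[of n \<alpha> \<gamma>] unfolding orthogonal_set_def by (cases "\<alpha> = \<gamma>") auto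
    then show "(\<lambda>g. refl n \<gamma> \<circ> g) \<circ> (\<lambda>g. refl n \<alpha> \<circ> g) = (\<lambda>g. refl n \<alpha> \<circ> g) \<circ> (\<lambda>g. refl n \<gamma> \<circ> g)"
      by (simp add: fun_eq_iff)
  qed
  then show ?thesis
    unfolding refl_prod_def by (rule comp_fun_commute_on.fold_insert[OF _ assms(2-4)])
qed

lemma orthogonal_set_subset: "orthogonal_set n D \<Longrightarrow> A \<subseteq> D \<Longrightarrow> orthogonal_set n A"
  unfolding orthogonal_set_def by blast

section \<open>Signed permutations\<close>

definition signed_perm :: "nat \<Rightarrow> ((nat \<Rightarrow> real) \<Rightarrow> (nat \<Rightarrow> real)) \<Rightarrow> (nat \<Rightarrow> nat) \<Rightarrow> (nat \<Rightarrow> real) \<Rightarrow> bool"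
  where "signed_perm n w p s \<longleftrightarrow>
     (\<forall>x y. w (x + y) = w x + w y) \<and> (\<forall>c x. w (\<lambda>k. c * x k) = (\<lambda>k. c * w x k))
     \<and> bij_betw p {1..n} {1..n}
     \<and> (\<forall>a\<in>{1..n}. (s a = 1 \<or> s a = -1) \<and> w (eps a) = (\<lambda>k. s a * eps (p a) k))"

lemma signed_perm_sign: "signed_perm n w p s \<Longrightarrow> a \<in> {1..n} \<Longrightarrow> s a = 1 \<or> s a = -1"
  unfolding signed_perm_def by blast

lemma signed_perm_bij: "signed_perm n w p s \<Longrightarrow> bij_betw p {1..n} {1..n}"
  unfolding signed_perm_def by blast

lemma signed_perm_vec:
  assumes "signed_perm n w p s" "a \<in> {1..n}" "b \<in> {1..n}"
  shows "w (vec a b e) = (\<lambda>k. s a * eps (p a) k + (e * s b) * eps (p b) k)"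
proof -
  have v: "vec a b e = eps a + (\<lambda>k. e * eps b k)" by (simp add: vec_def fun_eq_iff)
  have add: "w (x + y) = w x + w y" and smul: "w (\<lambda>k. c * x k) = (\<lambda>k. c * w x k)" for x y c
    using assms(1) unfolding signed_perm_def by blast+
  have "w (eps a) = (\<lambda>k. s a * eps (p a) k)" "w (eps b) = (\<lambda>k. s b * eps (p b) k)"
    using assms unfolding signed_perm_def by blast+
  then show ?thesis unfolding v add smul by (simp add: fun_eq_iff)
qed

lemma signed_perm_id: "signed_perm n id id (\<lambda>_. 1)"
  unfolding signed_perm_def by (simp add: fun_eq_iff)

lemma signed_perm_comp:
  assumes w1: "signed_perm n w1 p1 s1" and w2: "signed_perm n w2 p2 s2"
  shows "signed_perm n (w1 \<circ> w2) (p1 \<circ> p2) (\<lambda>a. s2 a * s1 (p2 a))"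
proof -
  have "(w1 \<circ> w2) (eps a) = (\<lambda>k. (s2 a * s1 (p2 a)) * eps ((p1 \<circ> p2) a) k)"
    and "s2 a * s1 (p2 a) = 1 \<or> s2 a * s1 (p2 a) = -1" if a: "a \<in> {1..n}" for a
  proof -
    have p2a: "p2 a \<in> {1..n}" using bij_betw_apply[OF signed_perm_bij[OF w2] a] .
    have "(w1 \<circ> w2) (eps a) = w1 (\<lambda>k. s2 a * eps (p2 a) k)" using w2 a by (simp add: signed_perm_def)
    also have "\<dots> = (\<lambda>k. s2 a * w1 (eps (p2 a)) k)" using w1 by (simp add: signed_perm_def)
    finally show "(w1 \<circ> w2) (eps a) = (\<lambda>k. (s2 a * s1 (p2 a)) * eps ((p1 \<circ> p2) a) k)"
      using w1 p2a by (simp add: signed_perm_def mult.assoc)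
    show "s2 a * s1 (p2 a) = 1 \<or> s2 a * s1 (p2 a) = -1"
      using signed_perm_sign[OF w1 p2a] signed_perm_sign[OF w2 a] by auto
  qed
  moreover have "bij_betw (p1 \<circ> p2) {1..n} {1..n}"
    using bij_betw_trans signed_perm_bij w1 w2 by blast
  ultimately show ?thesis using w1 w2 unfolding signed_perm_def by simp
qed

definition swap_idx :: "nat \<Rightarrow> nat \<Rightarrow> nat \<Rightarrow> nat" where
  "swap_idx c d a = (if a = c then d else if a = d then c else a)"

lemma refl_long_signed_perm:
  assumes "c \<in> {1..n}" "d \<in> {1..n}" "c < d" "e = 1 \<or> e = -1"
  shows "signed_perm n (refl n (vec c d e)) (swap_idx c d) (\<lambda>a. if a = c \<or> a = d then -e else 1)"
proof -
  have ii: "ip n (vec c d e) (vec c d e) = 2" using assms by (auto simp: ip_vec vec_app)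
  have "refl n (vec c d e) (eps a) = (\<lambda>k. (if a = c \<or> a = d then -e else 1) * eps (swap_idx c d a) k)"
    if "a \<in> {1..n}" for a
    using that assms unfolding refl_eps[OF that] ii by (auto simp: fun_eq_iff vec_app eps_app swap_idx_def)
  moreover have "bij_betw (swap_idx c d) {1..n} {1..n}"
    unfolding swap_idx_def using assms(1,2) by (intro bij_betw_byWitness[where f' = "swap_idx c d"]) (auto simp: swap_idx_def)
  ultimately show ?thesis unfolding signed_perm_def using refl_add refl_smul assms(4) by auto
qed

lemma refl_short_signed_perm:
  assumes "c \<in> {1..n}" "t \<noteq> TypeD"
  shows "signed_perm n (refl n (vec c c (short_coeff t))) id (\<lambda>a. if a = c then -1 else 1)"
proof -
  have ii: "ip n (vec c c (short_coeff t)) (vec c c (short_coeff t)) = (1 + short_coeff t)^2"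
    using assms by (auto simp: ip_vec vec_app power2_eq_square algebra_simps)
  have "refl n (vec c c (short_coeff t)) (eps a) = (\<lambda>k. (if a = c then -1 else 1) * eps a k)"
    if "a \<in> {1..n}" for a
    using that assms short_coeff_cases[of t] unfolding refl_eps[OF that] ii
    by (auto simp: fun_eq_iff vec_app eps_app)
  then show ?thesis unfolding signed_perm_def using refl_add refl_smul by auto
qed

lemma refl_root_signed_perm:
  assumes x: "(c, d, e) \<in> root_idx t K" and K: "K \<subseteq> {1..n}"
  shows "\<exists>p s. signed_perm n (refl n (vec c d e)) p s \<and> (\<forall>a. a \<notin> K \<longrightarrow> p a = a \<and> s a = 1)"
proof (cases "c < d")
  case True
  then have cd: "c \<in> K" "d \<in> K" "e = 1 \<or> e = -1" using root_idx_cases[OF x] by auto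
  then have "signed_perm n (refl n (vec c d e)) (swap_idx c d) (\<lambda>a. if a = c \<or> a = d then -e else 1)"
    using True K by (intro refl_long_signed_perm) auto
  then show ?thesis using cd by (intro exI conjI) (auto simp: swap_idx_def)
next
  case False
  then have c: "c \<in> K" "d = c" "e = short_coeff t" "t \<noteq> TypeD" using root_idx_cases[OF x] by auto
  then have "signed_perm n (refl n (vec c d e)) id (\<lambda>a. if a = c then -1 else 1)"
    unfolding c(2,3) using c(1,4) K by (intro refl_short_signed_perm) auto
  then show ?thesis using c by (intro exI conjI) auto
qed

lemma refl_prod_signed_perm:
  assumes "finite A" "orthogonal_set n A" "A \<subseteq> root_of ` root_idx t K" "K \<subseteq> {1..n}"
  shows "\<exists>p s. signed_perm n (refl_prod n A) p s \<and> (\<forall>a. a \<notin> K \<longrightarrow> p a = a \<and> s a = 1)"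
  using assms
proof (induction A rule: finite_induct)
  case empty
  have "refl_prod n {} = id" by (simp add: refl_prod_def)
  then show ?case using signed_perm_id[of n, unfolded id_def]
    by (intro exI[of _ id] exI[of _ "\<lambda>_. 1"]) simp
next
  case (insert \<beta> A)
  obtain p s where ps: "signed_perm n (refl_prod n A) p s" "\<forall>a. a \<notin> K \<longrightarrow> p a = a \<and> s a = 1"
    using insert orthogonal_set_subset[OF insert.prems(1)] by blast
  obtain c d e where "(c, d, e) \<in> root_idx t K" "\<beta> = vec c d e" using insert.prems(2) by auto
  then obtain p1 s1 where ps1: "signed_perm n (refl n \<beta>) p1 s1"
    "\<forall>a. a \<notin> K \<longrightarrow> p1 a = a \<and> s1 a = 1"
    using refl_root_signed_perm insert.prems(3) by blast
  have prod: "refl_prod n (insert \<beta> A) = refl n \<beta> \<circ> refl_prod n A"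
    by (rule refl_prod_insert[OF insert.prems(1) subset_refl insert.hyps])
  show ?case unfolding prod
    using signed_perm_comp[OF ps1(1) ps(1)] ps(2) ps1(2) by (intro exI conjI) (assumption, auto)
qed

lemma bij_betw_fixing_complement:
  assumes p: "bij_betw p A A" and K: "K \<subseteq> A" and outside: "\<forall>a. a \<notin> K \<longrightarrow> p a = a"
  shows "bij_betw p K K"
proof -
  have inj: "inj_on p A" using p bij_betw_def by blast
  have "p a \<in> K" if a: "a \<in> K" for a
  proof (rule ccontr)
    assume "p a \<notin> K"
    then have "p (p a) = p a" using outside by blast
    moreover have "p a \<in> A" using a K bij_betw_apply[OF p] by blast
    ultimately have "p a = a" using inj a K by (meson inj_onD subsetD)
    then show False using a \<open>p a \<notin> K\<close> by simp
  qed
  moreover have "K \<subseteq> p ` K"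
  proof
    fix c assume c: "c \<in> K"
    then obtain a where "a \<in> A" "c = p a" using K p by (auto simp: bij_betw_def)
    then show "c \<in> p ` K" using outside c by (cases "a \<in> K") auto
  qed
  ultimately show ?thesis using inj_on_subset[OF inj K] by (auto simp: bij_betw_def)
qed

section \<open>Which roots a signed permutation makes negative\<close>

text \<open>The signed permutation (p, s) sends the positive root with triple x to a negative root:
  a short root eps a changes sign iff s a = -1; the image s a eps (p a) + e s b eps (p b) of a
  long root is negative iff the coefficient at the smaller of p a, p b is -1.\<close>
definition sent_negative :: "(nat \<Rightarrow> nat) \<Rightarrow> (nat \<Rightarrow> real) \<Rightarrow> nat \<times> nat \<times> real \<Rightarrow> bool" where
  "sent_negative p s x = (case x of (a, b, e) \<Rightarrow> if a = b then s a = -1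
      else (p a < p b \<and> s a = -1) \<or> (p b < p a \<and> e * s b = -1))"

lemma sent_negative_iff:
  assumes sp: "signed_perm n w p s" and x: "(a, b, e) \<in> root_idx t J"
    and J: "J \<subseteq> {1..n}" "p a \<in> J" "p b \<in> J"
  shows "(- w (vec a b e) \<in> root_of ` root_idx t J \<longleftrightarrow> sent_negative p s (a, b, e))
    \<and> (w (vec a b e) \<in> root_of ` root_idx t J \<longleftrightarrow> \<not> sent_negative p s (a, b, e))"
proof -
  have ab: "a \<in> {1..n}" "b \<in> {1..n}" using root_idx_cases[OF x] J(1) by auto
  have wv: "w (vec a b e) = (\<lambda>k. s a * eps (p a) k + (e * s b) * eps (p b) k)"
    using signed_perm_vec[OF sp ab] .
  have sa: "s a = 1 \<or> s a = -1" "s b = 1 \<or> s b = -1" using signed_perm_sign[OF sp] ab by auto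
  show ?thesis
  proof (cases "a < b")
    case True
    have e: "e * s b = 1 \<or> e * s b = -1" using root_idx_cases[OF x] True sa by auto
    have pne: "p a \<noteq> p b"
      using True inj_onD[OF bij_betw_imp_inj_on[OF signed_perm_bij[OF sp]] _ ab] by fastforce
    have "- w (vec a b e) = (\<lambda>k. (- s a) * eps (p a) k + (- (e * s b)) * eps (p b) k)"
      unfolding wv by (simp add: fun_eq_iff)
    then have "- w (vec a b e) \<in> root_of ` root_idx t J
        \<longleftrightarrow> (p a < p b \<and> - s a = 1) \<or> (p b < p a \<and> - (e * s b) = 1)"
      using signed_pair_mem[of "p a" J "p b" "- s a" "- (e * s b)" t] J pne sa e by auto
    moreover have "w (vec a b e) \<in> root_of ` root_idx t J
        \<longleftrightarrow> (p a < p b \<and> s a = 1) \<or> (p b < p a \<and> e * s b = 1)"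
      unfolding wv using signed_pair_mem[of "p a" J "p b" "s a" "e * s b" t] J pne sa e by auto
    ultimately show ?thesis unfolding sent_negative_def using True pne sa e by auto
  next
    case False
    then have h: "b = a" "e = short_coeff t" "t \<noteq> TypeD" using root_idx_cases[OF x] by auto
    have w1: "w (vec a b e) = (\<lambda>k. s a * vec (p a) (p a) (short_coeff t) k)"
      unfolding h using wv[unfolded h] by (simp add: fun_eq_iff vec_def algebra_simps)
    then have "- w (vec a b e) = (\<lambda>k. (- s a) * vec (p a) (p a) (short_coeff t) k)"
      by (simp add: fun_eq_iff)
    then show ?thesis unfolding sent_negative_def w1
      using signed_short_mem[of "p a" J "- s a" t] signed_short_mem[of "p a" J "s a" t] J h sa
      by auto
  qed
qed

text \<open>Consequently, for a signed permutation preserving an index set J, both ways of counting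
  the inversions in the root subsystem on J (positive roots mapped to negative roots, and
  positive roots not mapped to positive roots) reduce to counting triples.\<close>
lemma card_sent_negative:
  assumes sp: "signed_perm n w p s" and J: "J \<subseteq> {1..n}" "\<forall>a\<in>J. p a \<in> J"
  shows "card {\<alpha> \<in> root_of ` root_idx t J. - w \<alpha> \<in> root_of ` root_idx t J}
           = card {x \<in> root_idx t J. sent_negative p s x}"
    and "card {\<alpha> \<in> root_of ` root_idx t J. w \<alpha> \<notin> root_of ` root_idx t J}
           = card {x \<in> root_idx t J. sent_negative p s x}"
proof -
  have neg: "- w (root_of x) \<in> root_of ` root_idx t J \<longleftrightarrow> sent_negative p s x"
    and pos: "w (root_of x) \<notin> root_of ` root_idx t J \<longleftrightarrow> sent_negative p s x"
    if x: "x \<in> root_idx t J" for x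
  proof -
    obtain a b e where abe: "x = (a, b, e)" by (cases x)
    then have "p a \<in> J" "p b \<in> J" using root_idx_cases[of a b e t J] x J(2) by auto
    then show "- w (root_of x) \<in> root_of ` root_idx t J \<longleftrightarrow> sent_negative p s x"
      and "w (root_of x) \<notin> root_of ` root_idx t J \<longleftrightarrow> sent_negative p s x"
      using sent_negative_iff[OF sp x[unfolded abe] J(1)] abe by auto
  qed
  have "{x \<in> root_idx t J. - w (root_of x) \<in> root_of ` root_idx t J}
      = {x \<in> root_idx t J. sent_negative p s x}"
    and "{x \<in> root_idx t J. w (root_of x) \<notin> root_of ` root_idx t J}
      = {x \<in> root_idx t J. sent_negative p s x}"
    using neg pos by blast+
  then show "card {\<alpha> \<in> root_of ` root_idx t J. - w \<alpha> \<in> root_of ` root_idx t J}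
           = card {x \<in> root_idx t J. sent_negative p s x}"
    and "card {\<alpha> \<in> root_of ` root_idx t J. w \<alpha> \<notin> root_of ` root_idx t J}
           = card {x \<in> root_idx t J. sent_negative p s x}"
    unfolding card_root_of by simp_all
qed

section \<open>The subsystem avoiding eps 1 and eps j\<close>

definition tilde_idx :: "nat \<Rightarrow> nat \<Rightarrow> nat set" where
  "tilde_idx n j = {1..n} - {1, j}"

lemma tilde_idx_iff: "a \<in> tilde_idx n j \<longleftrightarrow> 1 < a \<and> a \<le> n \<and> a \<noteq> j"
  by (auto simp: tilde_idx_def)

lemma tilde_idx_sub: "tilde_idx n j \<subseteq> {1..n}" and finite_tilde_idx: "finite (tilde_idx n j)"
  by (auto simp: tilde_idx_def)

lemma root_idx_tilde_iff:
  assumes j: "1 < j" and x: "(a, b, e) \<in> root_idx t {1..n}"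
  shows "(a, b, e) \<in> root_idx t (tilde_idx n j)
    \<longleftrightarrow> col (vec a b e) \<noteq> 1 \<and> col (vec a b e) \<noteq> j
      \<and> row (vec a b e) \<noteq> int j \<and> row (vec a b e) \<noteq> - int j"
proof (cases "a < b")
  case True
  then show ?thesis using root_idx_cases[OF x] j unfolding col_root_of[OF x] row_long[OF x True]
    by (auto simp: root_idx_def long_idx_def short_idx_def tilde_idx_def)
next
  case False
  then have h: "b = a" "e = short_coeff t" "t \<noteq> TypeD" "a \<in> {1..n}"
    using root_idx_cases[OF x] by auto
  show ?thesis using x h j unfolding h(1) col_root_of[OF x[unfolded h(1)]] row_short[OF x[unfolded h(1)]]
    by (auto simp: root_idx_def long_idx_def short_idx_def tilde_idx_def)
qed

lemma tilde_pos_roots: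
  assumes "1 < j"
  shows "pos_roots t n - (Cols t n 1 \<union> Cols t n j \<union> Rows t n (int j) \<union> Rows t n (- int j))
     = root_of ` root_idx t (tilde_idx n j)"
proof -
  have sub: "root_idx t (tilde_idx n j) \<subseteq> root_idx t {1..n}"
    by (rule root_idx_mono[OF tilde_idx_sub])
  let ?keep = "\<lambda>\<alpha>. col \<alpha> \<noteq> 1 \<and> col \<alpha> \<noteq> j \<and> row \<alpha> \<noteq> int j \<and> row \<alpha> \<noteq> - int j"
  have "x \<in> root_idx t (tilde_idx n j) \<longleftrightarrow> ?keep (root_of x)" if "x \<in> root_idx t {1..n}" for x
    using root_idx_tilde_iff[OF assms] that by (cases x) auto
  then have "{x \<in> root_idx t {1..n}. ?keep (root_of x)} = root_idx t (tilde_idx n j)"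
    using sub by blast
  moreover have "pos_roots t n - (Cols t n 1 \<union> Cols t n j \<union> Rows t n (int j) \<union> Rows t n (- int j))
      = root_of ` {x \<in> root_idx t {1..n}. ?keep (root_of x)}"
    unfolding pos_roots_root_idx Cols_def Rows_def by auto
  ultimately show ?thesis by simp
qed

lemma vec_1j_not_tilde: "vec 1 j 1 \<notin> root_of ` root_idx t (tilde_idx n j)"
proof
  assume "vec 1 j 1 \<in> root_of ` root_idx t (tilde_idx n j)"
  then obtain a b e where x: "(a, b, e) \<in> root_idx t (tilde_idx n j)" "vec 1 j 1 = vec a b e" by auto
  have "vec a b e 1 = 0" using root_idx_cases[OF x(1)] by (auto simp: vec_app tilde_idx_def)
  moreover have "vec 1 j 1 1 \<noteq> 0" by (simp add: vec_app)
  ultimately show False using x(2) by simp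
qed

text \<open>Under the hypotheses of the theorem, every root of D other than eps 1 + eps j is
  orthogonal to it and not in column 1, so it avoids the indices 1 and j.\<close>
lemma orthogonal_set_split:
  assumes DP: "D \<subseteq> pos_roots t n" and orth: "orthogonal_set n D"
    and j: "1 < j" "j \<le> n" and DC: "D \<inter> Cols t n 1 = {eps 1 + eps j}"
  shows "D = insert (vec 1 j 1) (D \<inter> root_of ` root_idx t (tilde_idx n j))"
proof -
  have \<beta>D: "vec 1 j 1 \<in> D" using DC by (auto simp: vec_plus)
  have "\<alpha> \<in> root_of ` root_idx t (tilde_idx n j)" if \<alpha>: "\<alpha> \<in> D" "\<alpha> \<noteq> vec 1 j 1" for \<alpha>
  proof -
    obtain a b e where x: "(a, b, e) \<in> root_idx t {1..n}" "\<alpha> = vec a b e"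
      using DP \<alpha>(1) unfolding pos_roots_root_idx by auto
    have "\<alpha> \<notin> Cols t n 1" using DC \<alpha> by (auto simp: vec_plus)
    then have a1: "a \<noteq> 1" using col_root_of[OF x(1)] x DP \<alpha>(1) by (auto simp: Cols_def)
    have "ip n \<alpha> (vec 1 j 1) = 0" using orth \<alpha> \<beta>D unfolding orthogonal_set_def by blast
    then have "vec a b e 1 + vec a b e j = 0" using ip_sym[of n \<alpha>] ip_vec[of 1 n j 1 \<alpha>] j x(2) by simp
    then have "a \<noteq> j \<and> b \<noteq> j \<and> b \<noteq> 1"
      using root_idx_cases[OF x(1)] a1 short_coeff_cases[of t] j by (auto simp: vec_app split: if_splits)
    then have "(a, b, e) \<in> root_idx t (tilde_idx n j)"
      using root_idx_cases[OF x(1)] a1 by (auto simp: root_idx_def long_idx_def short_idx_def tilde_idx_def)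
    then show ?thesis using x(2) by force
  qed
  then show ?thesis using \<beta>D by auto
qed

lemma refl_prod_split:
  assumes "D \<subseteq> pos_roots t n" and orth: "orthogonal_set n D"
    and "1 < j" "j \<le> n" and "D \<inter> Cols t n 1 = {eps 1 + eps j}"
  defines "DT \<equiv> D \<inter> root_of ` root_idx t (tilde_idx n j)"
  shows "finite DT" and "refl_prod n D = refl n (vec 1 j 1) \<circ> refl_prod n DT"
proof -
  have D: "D = insert (vec 1 j 1) DT" unfolding DT_def by (rule orthogonal_set_split[OF assms(1-5)])
  show fin: "finite DT" using assms(1) finite_root_idx[of "{1..n}" t]
    unfolding DT_def pos_roots_root_idx by (auto intro: finite_subset)
  have "refl_prod n (insert (vec 1 j 1) DT) = refl n (vec 1 j 1) \<circ> refl_prod n DT"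
    by (rule refl_prod_insert[OF orth _ fin]) (use D vec_1j_not_tilde in \<open>auto simp: DT_def\<close>)
  then show "refl_prod n D = refl n (vec 1 j 1) \<circ> refl_prod n DT" using D by simp
qed

section \<open>The set S(eps 1 + eps j)\<close>

text \<open>The triples of the roots alpha with eps 1 + eps j - alpha again a positive root, namely
  eps 1 -+ eps b for b \<notin> {1, j} (the sign + only for j < b), eps j +- eps b for j < b,
  eps a + eps j for 1 < a < j, and eps 1, eps j in type B, resp. eps 1 - eps j, 2 eps j in
  type C.\<close>
definition in_S :: "rtype \<Rightarrow> nat \<Rightarrow> nat \<times> nat \<times> real \<Rightarrow> bool" where
  "in_S t j x = (case x of (a, b, e) \<Rightarrow>
     (a = 1 \<and> b \<noteq> j \<and> b \<noteq> 1 \<and> (e = -1 \<or> j < b)) \<or> (t = TypeC \<and> a = 1 \<and> b = j \<and> e = -1)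
   \<or> (a = j \<and> b \<noteq> j) \<or> (a \<noteq> 1 \<and> a < j \<and> b = j \<and> e = 1)
   \<or> (t = TypeB \<and> a = b \<and> (a = 1 \<or> a = j)) \<or> (t = TypeC \<and> a = b \<and> a = j))"

lemma in_S_if_diff_root:
  assumes j: "1 < j" "j \<le> n" and x: "(a, b, e) \<in> root_idx t {1..n}"
    and diff: "vec 1 j 1 - vec a b e \<in> root_of ` root_idx t {1..n}"
  shows "in_S t j (a, b, e)"
proof -
  obtain c d f where y: "(c, d, f) \<in> root_idx t {1..n}" and eq: "vec 1 j 1 - vec a b e = vec c d f"
    using diff by auto
  have h: "vec 1 j 1 k - vec a b e k = vec c d f k" for k using eq by (metis minus_apply)
  from h[of 1] h[of j] h[of a] h[of b] h[of c] h[of d] root_idx_cases[OF x] root_idx_cases[OF y]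
    j short_coeff_cases[of t] short_coeff_B short_coeff_C
  show ?thesis unfolding in_S_def vec_app by (cases t) (auto split: if_splits)
qed

lemma diff_root_if_in_S:
  assumes j: "1 < j" "j \<le> n" and x: "(a, b, e) \<in> root_idx t {1..n}" and S: "in_S t j (a, b, e)"
  shows "vec 1 j 1 - vec a b e \<in> root_of ` root_idx t {1..n}"
proof -
  have diff: "vec 1 j 1 - vec a b e \<in> root_of ` root_idx t {1..n}"
    if "(c, d, f) \<in> root_idx t {1..n}" "vec 1 j 1 - vec a b e = vec c d f" for c d f
    using that by force
  note cx = root_idx_cases[OF x]
  note defs = root_idx_def long_idx_def short_idx_def vec_app fun_eq_iff short_coeff_def
  consider (A) "a = 1" "b \<noteq> j" "b \<noteq> 1" "e = -1" | (B) "a = 1" "b \<noteq> j" "b \<noteq> 1" "e = 1" "j < b"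
    | (C) "t = TypeC" "a = 1" "b = j" "e = -1" | (D) "a = j" "b \<noteq> j" "e = 1"
    | (E) "a = j" "b \<noteq> j" "e = -1" | (F) "a \<noteq> 1" "a < j" "b = j" "e = 1"
    | (G) "t = TypeB" "a = b" "a = 1" | (H) "t = TypeB" "a = b" "a = j"
    | (I) "t = TypeC" "a = b" "a = j"
    using S cx unfolding in_S_def by auto
  then show ?thesis
  proof cases
    case A then show ?thesis using cx j by (intro diff[of "min j b" "max j b" 1]) (auto simp: defs)
  next
    case B then show ?thesis using cx j by (intro diff[of j b "-1"]) (auto simp: defs)
  next
    case C then show ?thesis using cx j by (intro diff[of j j 1]) (auto simp: defs)
  next
    case D then show ?thesis using cx j by (intro diff[of 1 b "-1"]) (auto simp: defs)
  next
    case E then show ?thesis using cx j by (intro diff[of 1 b 1]) (auto simp: defs)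
  next
    case F then show ?thesis using cx j by (intro diff[of 1 a "-1"]) (auto simp: defs)
  next
    case G then show ?thesis using cx j by (intro diff[of j j 0]) (auto simp: defs)
  next
    case H then show ?thesis using cx j by (intro diff[of 1 1 0]) (auto simp: defs)
  next
    case I then show ?thesis using cx j by (intro diff[of 1 j "-1"]) (auto simp: defs)
  qed
qed

lemma card_Sset:
  assumes "1 < j" "j \<le> n"
  shows "card (Sset t n (eps 1 + eps j)) = card {x \<in> root_idx t {1..n}. in_S t j x}"
proof -
  have "vec 1 j 1 - root_of x \<in> root_of ` root_idx t {1..n} \<longleftrightarrow> in_S t j x"
    if x: "x \<in> root_idx t {1..n}" for x
  proof -
    obtain a b e where abe: "x = (a, b, e)" by (cases x)
    show ?thesis using x in_S_if_diff_root[OF assms] diff_root_if_in_S[OF assms]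
      unfolding abe root_of_triple by blast
  qed
  then have "{x \<in> root_idx t {1..n}. vec 1 j 1 - root_of x \<in> root_of ` root_idx t {1..n}}
      = {x \<in> root_idx t {1..n}. in_S t j x}" by blast
  then show ?thesis unfolding Sset_def pos_roots_root_idx vec_plus card_root_of by simp
qed

section \<open>Counting the inversions outside the subsystem\<close>

lemma card_filter_split:
  assumes "finite A" "B \<subseteq> A"
  shows "card {x \<in> A. P x} = card {x \<in> B. P x} + card {x \<in> A - B. P x}"
proof -
  have "{x \<in> A. P x} = {x \<in> B. P x} \<union> {x \<in> A - B. P x}" using assms(2) by auto
  moreover have "card ({x \<in> B. P x} \<union> {x \<in> A - B. P x}) = card {x \<in> B. P x} + card {x \<in> A - B. P x}"
    using assms by (intro card_Un_disjoint) (auto intro: finite_subset)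
  ultimately show ?thesis by simp
qed

lemma card_signs: "s = 1 \<or> s = -1 \<Longrightarrow> card {e \<in> {1, -1::real}. Q \<or> e * s = -1} = (if Q then 2 else 1)"
proof (cases Q)
  case False
  assume "s = 1 \<or> s = -1"
  then have "{e \<in> {1, -1::real}. Q \<or> e * s = -1} = {-s}" using False by auto
  then show ?thesis using False by simp
next
  case True
  then have "{e \<in> {1, -1::real}. Q \<or> e * s = -1} = {1, -1}" by auto
  then show ?thesis using True by simp
qed

lemma card_first_column:
  assumes "finite K" "finite E"
  shows "card {x \<in> Pair (1::nat) ` (K \<times> E). P x} = (\<Sum>b\<in>K. card {e \<in> E. P (1, b, e)})"
proof -
  have "card {x \<in> Pair (1::nat) ` (K \<times> E). P x}
      = card (Pair (1::nat) ` (SIGMA b:K. {e \<in> E. P (1, b, e)}))"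
    by (rule arg_cong[where f = card]) auto
  also have "\<dots> = card (SIGMA b:K. {e \<in> E. P (1, b, e)})"
    by (rule card_image) (auto simp: inj_on_def)
  also have "\<dots> = (\<Sum>b\<in>K. card {e \<in> E. P (1, b, e)})"
    using assms by (simp add: card_SigmaI)
  finally show ?thesis .
qed

text \<open>The setting of the theorem, on the level of signed permutations: (p, s) describes the
  product of the reflections in the roots of D avoiding 1 and j, which permutes K = tilde_idx n j,
  and (p', s') describes sigma, which in addition maps eps 1 to -eps j and eps j to -eps 1.\<close>
locale swapped_ends =
  fixes n j :: nat and p :: "nat \<Rightarrow> nat" and s :: "nat \<Rightarrow> real"
    and p' :: "nat \<Rightarrow> nat" and s' :: "nat \<Rightarrow> real"
  assumes j: "1 < j" "j \<le> n"
    and perm: "bij_betw p (tilde_idx n j) (tilde_idx n j)"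
    and ends: "p' 1 = j" "p' j = 1" "s' 1 = -1" "s' j = -1"
    and agree: "\<And>a. a \<in> tilde_idx n j \<Longrightarrow> p' a = p a \<and> s' a = s a \<and> (s a = 1 \<or> s a = -1)"
begin

abbreviation "K \<equiv> tilde_idx n j"

definition corner :: "rtype \<Rightarrow> (nat \<times> nat \<times> real) set" where "corner t = root_idx t {1, j}"
definition first_column :: "(nat \<times> nat \<times> real) set" where
  "first_column = Pair 1 ` (K \<times> {1, -1})"

lemma p_K: "a \<in> K \<Longrightarrow> 1 < p a \<and> p a \<le> n \<and> p a \<noteq> j"
  using bij_betw_apply[OF perm] by (auto simp: tilde_idx_iff)

lemma negative_on_tilde:
  "{x \<in> root_idx t K. sent_negative p' s' x} = {x \<in> root_idx t K. sent_negative p s x}"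
proof -
  have "sent_negative p' s' (a, b, e) = sent_negative p s (a, b, e)" if "(a, b, e) \<in> root_idx t K" for a b e
    using that root_idx_cases[OF that] agree by (auto simp: sent_negative_def)
  then show ?thesis by auto
qed

lemma in_S_tilde: "{x \<in> root_idx t K. in_S t j x} = {}"
  by (auto simp: in_S_def tilde_idx_def dest!: root_idx_cases)

text \<open>The roots on the indices 1, j: sigma makes eps 1 + eps j and the short roots negative,
  and exactly one fewer of them lies in S(beta).\<close>
lemma corner_count:
  "card {x \<in> corner t. sent_negative p' s' x} = card {x \<in> corner t. in_S t j x} + 1"
proof -
  have c: "corner t = {(1, j, 1), (1, j, -1)} \<union> (if t = TypeD then {} else {(1, 1, short_coeff t), (j, j, short_coeff t)})"
    using j by (auto simp: corner_def root_idx_def long_idx_def short_idx_def)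
  have neg: "{x \<in> corner t. sent_negative p' s' x}
      = insert (1, j, 1) (if t = TypeD then {} else {(1, 1, short_coeff t), (j, j, short_coeff t)})"
    using j ends unfolding c by (auto simp: sent_negative_def)
  show ?thesis
  proof (cases t)
    case TypeB
    then have "{x \<in> corner t. in_S t j x} = {(1, 1, 0), (j, j, 0)}"
      using j unfolding c by (auto simp: in_S_def short_coeff_B)
    then show ?thesis unfolding neg using j TypeB by (simp add: short_coeff_B)
  next
    case TypeC
    then have "{x \<in> corner t. in_S t j x} = {(1, j, -1), (j, j, 1)}"
      using j unfolding c by (auto simp: in_S_def short_coeff_C)
    then show ?thesis unfolding neg using j TypeC by (simp add: short_coeff_C)
  next
    case TypeD
    then have S: "{x \<in> corner t. in_S t j x} = {}" using j unfolding c by (auto simp: in_S_def)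
    show ?thesis unfolding neg S using TypeD by simp
  qed
qed

text \<open>In column 1, the root eps 1 + e eps b (b in K) is made negative by sigma iff
  j < p b or e s b = -1, and lies in S(beta) iff e = -1 or j < b; summing over b, the two
  counts agree since p permutes K.\<close>
lemma first_column_count:
  "card {x \<in> first_column. sent_negative p' s' x} = card {x \<in> first_column. in_S t j x}"
proof -
  have neg: "card {e \<in> {1, -1}. sent_negative p' s' (1, b, e)} = (if j < p b then 2 else 1)"
    if b: "b \<in> K" for b
  proof -
    have "{e \<in> {1, -1}. sent_negative p' s' (1, b, e)} = {e \<in> {1, -1}. j < p b \<or> e * s b = -1}"
      using b agree[OF b] p_K[OF b] ends by (auto simp: sent_negative_def tilde_idx_iff)
    then show ?thesis using card_signs agree[OF b] by simp
  qed
  have S: "card {e \<in> {1, -1}. in_S t j (1, b, e)} = (if j < b then 2 else 1)"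
    if b: "b \<in> K" for b
  proof -
    have "{e \<in> {1, -1}. in_S t j (1, b, e)} = {e \<in> {1, -1::real}. j < b \<or> e * 1 = -1}"
      using b by (auto simp: in_S_def tilde_idx_iff)
    then show ?thesis using card_signs[of 1] by simp
  qed
  have "card {x \<in> first_column. sent_negative p' s' x}
      = (\<Sum>b\<in>K. card {e \<in> {1, -1}. sent_negative p' s' (1, b, e)})"
    unfolding first_column_def by (rule card_first_column) (simp_all add: finite_tilde_idx)
  also have "\<dots> = (\<Sum>b\<in>K. (\<lambda>c. if j < c then 2 else 1) (p b))"
    using neg by (rule sum.cong[OF refl])
  also have "\<dots> = (\<Sum>b\<in>K. if j < b then 2 else 1)"
    by (rule sum.reindex_bij_betw[OF perm])
  also have "\<dots> = (\<Sum>b\<in>K. card {e \<in> {1, -1}. in_S t j (1, b, e)})"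
    using S by (intro sum.cong) auto
  also have "\<dots> = card {x \<in> first_column. in_S t j x}"
    unfolding first_column_def by (rule card_first_column[symmetric]) (simp_all add: finite_tilde_idx)
  finally show ?thesis .
qed

text \<open>The remaining roots eps a + e eps j (a in K, a < j) and eps j + e eps b (b in K, j < b)
  are made negative by sigma exactly when they lie in S(beta).\<close>
lemma mixed_agree:
  assumes "x \<in> root_idx t {1..n} - root_idx t K - corner t - first_column"
  shows "sent_negative p' s' x \<longleftrightarrow> in_S t j x"
proof -
  obtain a b e where x: "x = (a, b, e)" by (cases x)
  have F: "(a, b, e) \<in> root_idx t {1..n}" and nK: "(a, b, e) \<notin> root_idx t K" and nc: "(a, b, e) \<notin> corner t"
    and nr: "(a, b, e) \<notin> first_column" using assms x by auto
  have long: "a < b" "e = 1 \<or> e = -1"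
    using root_idx_cases[OF F] nK nc j
    by (auto simp: corner_def root_idx_def short_idx_def tilde_idx_iff)
  then have "a \<in> {1..n}" "b \<in> {1..n}" using root_idx_cases[OF F] by auto
  then consider "a \<in> K" "b = j" | "a = j" "b \<in> K"
    using long nK nc nr j
    by (auto simp: corner_def first_column_def root_idx_def long_idx_def tilde_idx_iff image_iff)
  then show ?thesis
  proof cases
    case 1
    then show ?thesis using x agree[OF 1(1)] p_K[OF 1(1)] ends long
      by (auto simp: sent_negative_def in_S_def tilde_idx_iff)
  next
    case 2
    then show ?thesis using x agree[OF 2(2)] p_K[OF 2(2)] ends long
      by (auto simp: sent_negative_def in_S_def tilde_idx_iff)
  qed
qed

theorem count_inversions:
  "card {x \<in> root_idx t {1..n}. sent_negative p' s' x}
     = card {x \<in> root_idx t K. sent_negative p s x} + card {x \<in> root_idx t {1..n}. in_S t j x} + 1"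
proof -
  have fin: "finite (root_idx t {1..n})" by (simp add: finite_root_idx)
  have sub: "root_idx t K \<subseteq> root_idx t {1..n}" "corner t \<subseteq> root_idx t {1..n} - root_idx t K"
    "first_column \<subseteq> root_idx t {1..n} - root_idx t K - corner t"
    using root_idx_mono[OF tilde_idx_sub] j
    by (auto simp: corner_def first_column_def root_idx_def long_idx_def short_idx_def tilde_idx_iff)
  have f: "finite (root_idx t {1..n} - root_idx t K)" "finite (root_idx t {1..n} - root_idx t K - corner t)" using fin by auto
  let ?mixed = "root_idx t {1..n} - root_idx t K - corner t - first_column"
  have split: "card {x \<in> root_idx t {1..n}. P x} = card {x \<in> root_idx t K. P x} + card {x \<in> corner t. P x}
      + card {x \<in> first_column. P x} + card {x \<in> ?mixed. P x}" for P
    using card_filter_split[OF fin sub(1), of P] card_filter_split[OF f(1) sub(2), of P]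
      card_filter_split[OF f(2) sub(3), of P] by linarith
  have "{x \<in> ?mixed. sent_negative p' s' x} = {x \<in> ?mixed. in_S t j x}"
    using mixed_agree by blast
  then have "card {x \<in> root_idx t {1..n}. sent_negative p' s' x} = card {x \<in> root_idx t K. sent_negative p s x}
      + (card {x \<in> corner t. in_S t j x} + 1) + card {x \<in> first_column. in_S t j x} + card {x \<in> ?mixed. in_S t j x}"
    unfolding split[of "sent_negative p' s'"] negative_on_tilde corner_count first_column_count[of t] by simp
  also have "\<dots> = card {x \<in> root_idx t K. sent_negative p s x} + card {x \<in> root_idx t {1..n}. in_S t j x} + 1"
    unfolding split[of "in_S t j"] in_S_tilde by simp
  finally show ?thesis .
qed

end

lemma tilde_signed_perm:
  assumes "finite A" "orthogonal_set n A" "A \<subseteq> root_of ` root_idx t (tilde_idx n j)"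
  obtains p s where "signed_perm n (refl_prod n A) p s"
    and "\<forall>a. a \<notin> tilde_idx n j \<longrightarrow> p a = a \<and> s a = 1"
    and "bij_betw p (tilde_idx n j) (tilde_idx n j)"
proof -
  obtain p s where sp: "signed_perm n (refl_prod n A) p s"
    and out: "\<forall>a. a \<notin> tilde_idx n j \<longrightarrow> p a = a \<and> s a = 1"
    using refl_prod_signed_perm[OF assms tilde_idx_sub] by blast
  moreover have "bij_betw p (tilde_idx n j) (tilde_idx n j)"
    using bij_betw_fixing_complement[OF signed_perm_bij[OF sp] tilde_idx_sub] out by blast
  ultimately show ?thesis using that by blast
qed

lemma swapped_ends_signed_perm:
  assumes j: "1 < j" "j \<le> n" and sp: "signed_perm n w p s"
    and out: "\<forall>a. a \<notin> tilde_idx n j \<longrightarrow> p a = a \<and> s a = 1"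
    and perm: "bij_betw p (tilde_idx n j) (tilde_idx n j)"
  obtains p' s' where "signed_perm n (refl n (vec 1 j 1) \<circ> w) p' s'"
    and "swapped_ends n j p s p' s'"
proof -
  define p' where "p' = swap_idx 1 j \<circ> p"
  define s' where "s' = (\<lambda>a. s a * (if p a = 1 \<or> p a = j then - 1 else 1))"
  have "signed_perm n (refl n (vec 1 j 1) \<circ> w) p' s'"
    unfolding p'_def s'_def using signed_perm_comp[OF refl_long_signed_perm sp] j by simp
  moreover have "swapped_ends n j p s p' s'"
  proof
    show "1 < j" "j \<le> n" "bij_betw p (tilde_idx n j) (tilde_idx n j)" using j perm by simp_all
    show "p' 1 = j" "p' j = 1" "s' 1 = -1" "s' j = -1"
      using out j by (auto simp: p'_def s'_def swap_idx_def tilde_idx_iff)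
    show "p' a = p a \<and> s' a = s a \<and> (s a = 1 \<or> s a = -1)" if a: "a \<in> tilde_idx n j" for a
      using bij_betw_apply[OF perm a] signed_perm_sign[OF sp] a tilde_idx_sub
      by (auto simp: p'_def s'_def swap_idx_def tilde_idx_iff)
  qed
  ultimately show ?thesis using that by blast
qed

theorem lemma3p3:
  fixes t :: rtype and n j :: nat and D :: "(nat \<Rightarrow> real) set"
  assumes "D \<subseteq> pos_roots t n"
    and "orthogonal_set n D"
    and "1 < j" and "j \<le> n"
    and "D \<inter> Cols t n 1 = {eps 1 + eps j}"
  shows "let PhiT = pos_roots t n - (Cols t n 1 \<union> Cols t n j \<union> Rows t n (int j) \<union> Rows t n (- int j));
             DT = D \<inter> PhiT;
             sigmaT = refl_prod n DT
         in len t n (refl_prod n D)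
            = card {\<alpha> \<in> PhiT. sigmaT \<alpha> \<notin> PhiT} + card (Sset t n (eps 1 + eps j)) + 1"
proof -
  let ?K = "tilde_idx n j"
  define DT where "DT = D \<inter> root_of ` root_idx t ?K"
  have PhiT: "pos_roots t n - (Cols t n 1 \<union> Cols t n j \<union> Rows t n (int j) \<union> Rows t n (- int j))
      = root_of ` root_idx t ?K" using tilde_pos_roots[OF assms(3)] .
  have fin: "finite DT" and sigma: "refl_prod n D = refl n (vec 1 j 1) \<circ> refl_prod n DT"
    using refl_prod_split[OF assms] unfolding DT_def by blast+
  obtain p s where sp: "signed_perm n (refl_prod n DT) p s"
    and out: "\<forall>a. a \<notin> ?K \<longrightarrow> p a = a \<and> s a = 1" and perm: "bij_betw p ?K ?K"
    using tilde_signed_perm[OF fin orthogonal_set_subset[OF assms(2)]] unfolding DT_def by blast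
  obtain p' s' where sp': "signed_perm n (refl_prod n D) p' s'" and sw: "swapped_ends n j p s p' s'"
    using swapped_ends_signed_perm[OF assms(3,4) sp out perm] unfolding sigma by blast
  have "len t n (refl_prod n D) = card {x \<in> root_idx t {1..n}. sent_negative p' s' x}"
    unfolding len_def pos_roots_root_idx
    by (rule card_sent_negative(1)[OF sp']) (use bij_betw_apply[OF signed_perm_bij[OF sp']] in auto)
  moreover have "card {\<alpha> \<in> root_of ` root_idx t ?K. refl_prod n DT \<alpha> \<notin> root_of ` root_idx t ?K}
      = card {x \<in> root_idx t ?K. sent_negative p s x}"
    by (rule card_sent_negative(2)[OF sp tilde_idx_sub]) (use bij_betw_apply[OF perm] in auto)
  ultimately show ?thesis
    unfolding Let_def PhiT DT_def[symmetric] card_Sset[OF assms(3,4)]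
      swapped_ends.count_inversions[OF sw] by simp
qed

end
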